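(* Let $F'_Y\le F_Y$ and $F_Z$ be distribution functions, $K=F_Y+F_Z-F_YF_Z$, $K'=F'_Y+F_Z-F'_YF_Z$, and let $\chi'$ and $\chi$ be the canonical maxmin generators of $(F'_Y,F_Z)$ and $(F_Y,F_Z)$ respectively. Then $\chi'\le\chi$ pointwise on $[0,1]$.
   Context: A distribution function is a non-decreasing map $F:\mathbb R\to[0,1]$ (no right-continuity assumed) with limits $0$ at $-\infty$ and $1$ at $+\infty$; $f(y\pm)$ are one-sided limits. The canonical maxmin generator $\chi$ of $(F_Y,F_Z)$, with $K=F_Y+F_Z-F_YF_Z$: $\chi(0)=0$, $\chi(1)=1$, and for $w\in(0,1)$ choose $y_0$ with $K(y_0-)\le w\le K(y_0+)$, let $w_-=K(y_0-)$, $w_l=F_Y(y_0-)+F_Z(y_0)-F_Y(y_0-)F_Z(y_0)$, $w_u=F_Y(y_0+)+F_Z(y_0)-F_Y(y_0+)F_Z(y_0)$, $w_+=K(y_0+)$, and $\chi(w)=F_Y(y_0-)$ on $[w_-,w_l]$, $\chi(w)=\frac{w-F_Z(y_0)}{1-F_Z(y_0)}$ on $[w_l,w_u]$, $\chi(w)=F_Y(y_0+)$ on $[w_u,w_+]$. *)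

theory Defs
  imports "HOL-Analysis.Analysis"
begin

definition left_lim :: "(real \<Rightarrow> real) \<Rightarrow> real \<Rightarrow> real" where
  "left_lim f y = Lim (at_left y) f"

definition right_lim :: "(real \<Rightarrow> real) \<Rightarrow> real \<Rightarrow> real" where
  "right_lim f y = Lim (at_right y) f"

text \<open>Distribution function: non-decreasing, values in [0,1], limits 0 and 1 at
  minus/plus infinity; no right-continuity assumed.\<close>
definition distribution_function :: "(real \<Rightarrow> real) \<Rightarrow> bool" where
  "distribution_function F \<longleftrightarrow> mono F \<and> (\<forall>y. 0 \<le> F y \<and> F y \<le> 1)
     \<and> (F \<longlongrightarrow> 0) at_bot \<and> (F \<longlongrightarrow> 1) at_top"

definition maxmin_K :: "(real \<Rightarrow> real) \<Rightarrow> (real \<Rightarrow> real) \<Rightarrow> real \<Rightarrow> real" where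
  "maxmin_K FY FZ = (\<lambda>y. FY y + FZ y - FY y * FZ y)"

definition canonical_generator :: "(real \<Rightarrow> real) \<Rightarrow> (real \<Rightarrow> real) \<Rightarrow> real \<Rightarrow> real" where
  "canonical_generator FY FZ w =
     (if w = 0 then 0 else if w = 1 then 1 else
      (let K = maxmin_K FY FZ;
           y0 = (SOME y. left_lim K y \<le> w \<and> w \<le> right_lim K y);
           wl = left_lim FY y0 + FZ y0 - left_lim FY y0 * FZ y0;
           wu = right_lim FY y0 + FZ y0 - right_lim FY y0 * FZ y0
       in if w \<le> wl then left_lim FY y0
          else if w \<le> wu then (w - FZ y0) / (1 - FZ y0)
          else right_lim FY y0))"

end

(* For 0 < w < 1 the canonical generator is a supremum,
     chi(w) = sup_y min (F_Y(y+), (w - F_Z(y)) / (1 - F_Z(y))),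
   whichever point y0 with K(y0-) <= w <= K(y0+) the definition picks: points y < y0 contribute
   at most F_Y(y0-) <= chi(w), points y > y0 at most chi(w) because F_Z(y) >= F_Z(y0+) and
   w <= K(y0+), and chi(w) itself is attained at y0 or, on the first piece of the formula,
   approached from the left of y0. The supremum is monotone in F_Y, since F_Y(y+) is. *)

theory Submission
  imports Defs
begin

locale mono_unit_fun =
  fixes F :: "real \<Rightarrow> real"
  assumes mono: "mono F" and nonneg: "\<And>y. 0 \<le> F y" and le_one: "\<And>y. F y \<le> 1"
begin

lemma bdd_above_image: "bdd_above (F ` S)"
  by (rule bdd_aboveI[where M=1]) (auto intro: le_one)

lemma bdd_below_image: "bdd_below (F ` S)"
  by (rule bdd_belowI[where m=0]) (auto intro: nonneg)

lemma tendsto_Sup_at_left: "(F \<longlongrightarrow> Sup (F ` {..<y})) (at_left y)"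
  using Lim_left_bound[where I=UNIV and f=F and K=1 and x=y] by (auto intro: le_one monoD[OF mono])

lemma tendsto_Inf_at_right: "(F \<longlongrightarrow> Inf (F ` {y<..})) (at_right y)"
  using Lim_right_bound[where I=UNIV and f=F and K=0 and x=y] by (auto intro: nonneg monoD[OF mono])

lemma left_lim_eq_Sup: "left_lim F y = Sup (F ` {..<y})"
  unfolding left_lim_def by (rule tendsto_Lim[OF _ tendsto_Sup_at_left]) simp

lemma right_lim_eq_Inf: "right_lim F y = Inf (F ` {y<..})"
  unfolding right_lim_def by (rule tendsto_Lim[OF _ tendsto_Inf_at_right]) simp

lemma tendsto_left_lim: "(F \<longlongrightarrow> left_lim F y) (at_left y)"
  using tendsto_Sup_at_left left_lim_eq_Sup by simp

lemma tendsto_right_lim: "(F \<longlongrightarrow> right_lim F y) (at_right y)"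
  using tendsto_Inf_at_right right_lim_eq_Inf by simp

lemma left_lim_le: "left_lim F y \<le> F y"
  unfolding left_lim_eq_Sup by (rule cSup_least) (auto intro: monoD[OF mono] exI[of _ "y - 1"])

lemma le_left_lim: "x < y \<Longrightarrow> F x \<le> left_lim F y"
  unfolding left_lim_eq_Sup by (rule cSup_upper) (auto intro: bdd_above_image)

lemma le_right_lim: "F y \<le> right_lim F y"
  unfolding right_lim_eq_Inf by (rule cInf_greatest) (auto intro: monoD[OF mono] exI[of _ "y + 1"])

lemma right_lim_le: "y < x \<Longrightarrow> right_lim F y \<le> F x"
  unfolding right_lim_eq_Inf by (rule cInf_lower) (auto intro: bdd_below_image)

lemma left_lim_nonneg: "0 \<le> left_lim F y"
  using le_left_lim[of "y - 1" y] nonneg[of "y - 1"] by simp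

lemma right_lim_le_one: "right_lim F y \<le> 1"
  using right_lim_le[of y "y + 1"] le_one[of "y + 1"] by simp

lemma right_lim_le_left_lim: "x < y \<Longrightarrow> right_lim F x \<le> left_lim F y"
  using right_lim_le[of x "(x + y) / 2"] le_left_lim[of "(x + y) / 2" y] by simp

lemma left_lim_approx:
  assumes "e > 0"
  obtains x where "x < y" "left_lim F y - e < F x"
proof -
  from assms have "Sup (F ` {..<y}) - e < Sup (F ` {..<y})" by simp
  from less_cSupD[OF _ this] show ?thesis
    using that unfolding left_lim_eq_Sup by auto
qed

lemma jump_point_exists:
  assumes "F a < w" "w < F b"
  shows "\<exists>y. left_lim F y \<le> w \<and> w \<le> right_lim F y"
proof -
  define S where "S = {x. F x < w}"
  have "a \<in> S" using assms(1) S_def by simp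
  have S_bdd: "bdd_above S"
    using assms(2) monoD[OF mono] unfolding S_def
    by (intro bdd_aboveI[where M=b]) (metis linorder_not_le mem_Collect_eq order.strict_trans2 less_asym)
  define y where "y = Sup S"
  have "left_lim F y \<le> w" unfolding left_lim_eq_Sup
  proof (rule cSup_least)
    fix v assume "v \<in> F ` {..<y}"
    then obtain t where "t < y" "v = F t" by auto
    moreover from \<open>t < y\<close> obtain s where "s \<in> S" "t < s"
      using less_cSupD[of S] \<open>a \<in> S\<close> y_def by blast
    ultimately show "v \<le> w" using monoD[OF mono, of t s] S_def by auto
  qed simp
  moreover have "w \<le> right_lim F y" unfolding right_lim_eq_Inf
  proof (rule cInf_greatest)
    fix v assume "v \<in> F ` {y<..}"
    then obtain t where "y < t" "v = F t" by auto
    moreover from \<open>y < t\<close> have "t \<notin> S" using cSup_upper[OF _ S_bdd] y_def by force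
    ultimately show "w \<le> v" using S_def by auto
  qed simp
  ultimately show ?thesis by blast
qed

end

lemma distribution_function_imp_mono_unit_fun:
  "distribution_function F \<Longrightarrow> mono_unit_fun F"
  unfolding distribution_function_def by unfold_locales auto

lemma right_lim_mono:
  assumes "mono_unit_fun F'" "mono_unit_fun F" "\<And>y. F' y \<le> F y"
  shows "right_lim F' y \<le> right_lim F y"
  unfolding mono_unit_fun.right_lim_eq_Inf[OF assms(1)] mono_unit_fun.right_lim_eq_Inf[OF assms(2)]
  by (rule cInf_mono) (auto intro: order_trans[OF _ assms(3)] mono_unit_fun.bdd_below_image[OF assms(1)])

lemma maxmin_K_eq: "maxmin_K F G y = 1 - (1 - F y) * (1 - G y)"
  by (simp add: maxmin_K_def algebra_simps)

lemma mono_unit_fun_maxmin_K: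
  assumes "mono_unit_fun F" "mono_unit_fun G"
  shows "mono_unit_fun (maxmin_K F G)"
proof
  interpret F: mono_unit_fun F by fact
  interpret G: mono_unit_fun G by fact
  show "mono (maxmin_K F G)"
  proof (rule monoI)
    fix a b :: real assume "a \<le> b"
    then have "(1 - F b) * (1 - G b) \<le> (1 - F a) * (1 - G a)"
      using monoD[OF F.mono] monoD[OF G.mono] F.le_one G.le_one by (intro mult_mono) auto
    then show "maxmin_K F G a \<le> maxmin_K F G b" unfolding maxmin_K_eq by simp
  qed
  fix y
  show "0 \<le> maxmin_K F G y" "maxmin_K F G y \<le> 1"
    unfolding maxmin_K_eq using F.nonneg[of y] G.nonneg[of y] F.le_one[of y] G.le_one[of y]
    by (simp_all add: mult_le_one)
qed

lemma left_lim_maxmin_K: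
  assumes "mono_unit_fun F" "mono_unit_fun G"
  shows "left_lim (maxmin_K F G) y = left_lim F y + left_lim G y - left_lim F y * left_lim G y"
  unfolding maxmin_K_def left_lim_def[of "\<lambda>y. F y + G y - F y * G y"]
  by (rule tendsto_Lim) (simp, intro tendsto_intros mono_unit_fun.tendsto_left_lim assms)

lemma right_lim_maxmin_K:
  assumes "mono_unit_fun F" "mono_unit_fun G"
  shows "right_lim (maxmin_K F G) y = right_lim F y + right_lim G y - right_lim F y * right_lim G y"
  unfolding maxmin_K_def right_lim_def[of "\<lambda>y. F y + G y - F y * G y"]
  by (rule tendsto_Lim) (simp, intro tendsto_intros mono_unit_fun.tendsto_right_lim assms)

lemma maxmin_K_jump_point_exists:
  assumes "distribution_function F" "distribution_function G" "0 < w" "w < 1"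
  shows "\<exists>y. left_lim (maxmin_K F G) y \<le> w \<and> w \<le> right_lim (maxmin_K F G) y"
proof -
  let ?K = "maxmin_K F G"
  have "(?K \<longlongrightarrow> 0 + 0 - 0 * 0) at_bot" "(?K \<longlongrightarrow> 1 + 1 - 1 * 1) at_top"
    unfolding maxmin_K_def using assms(1,2) unfolding distribution_function_def
    by (intro tendsto_intros; blast)+
  with assms(3,4) have "eventually (\<lambda>x. ?K x < w) at_bot" "eventually (\<lambda>x. w < ?K x) at_top"
    by (auto dest: order_tendstoD)
  then obtain a b where "?K a < w" "w < ?K b"
    by (meson eventually_at_bot_linorder eventually_at_top_linorder order_refl)
  then show ?thesis
    using mono_unit_fun.jump_point_exists[OF mono_unit_fun_maxmin_K]
      distribution_function_imp_mono_unit_fun assms(1,2) by blast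
qed

(* The piecewise formula of the canonical generator with a = F_Y(y0-), b = F_Y(y0+), z = F_Z(y0). *)
definition generator_value :: "real \<Rightarrow> real \<Rightarrow> real \<Rightarrow> real \<Rightarrow> real" where
  "generator_value a b z w =
     (if w \<le> a + z - a * z then a else if w \<le> b + z - b * z then (w - z) / (1 - z) else b)"

lemma canonical_generator_at_jump_point:
  assumes "distribution_function F" "distribution_function G" "0 < w" "w < 1"
  obtains y0 where "left_lim (maxmin_K F G) y0 \<le> w" "w \<le> right_lim (maxmin_K F G) y0"
    and "canonical_generator F G w = generator_value (left_lim F y0) (right_lim F y0) (G y0) w"
proof -
  define y0 where "y0 = (SOME y. left_lim (maxmin_K F G) y \<le> w \<and> w \<le> right_lim (maxmin_K F G) y)"
  have "left_lim (maxmin_K F G) y0 \<le> w" "w \<le> right_lim (maxmin_K F G) y0"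
    using someI_ex[OF maxmin_K_jump_point_exists[OF assms]] unfolding y0_def by blast+
  moreover have "canonical_generator F G w = generator_value (left_lim F y0) (right_lim F y0) (G y0) w"
    using assms(3,4) unfolding canonical_generator_def generator_value_def Let_def y0_def by simp
  ultimately show ?thesis by (rule that)
qed

lemma divide_le_if_le_maxmin:
  fixes u z w :: real
  assumes "0 \<le> u" "z \<le> 1" "w \<le> u + z - u * z"
  shows "(w - z) / (1 - z) \<le> u"
proof (cases "z = 1")
  case False
  with assms show ?thesis by (simp add: pos_divide_le_eq algebra_simps)
qed (use assms in simp)

lemma le_divide_if_maxmin_le:
  fixes u z w :: real
  assumes "z \<le> 1" "w < 1" "u + z - u * z \<le> w"
  shows "u \<le> (w - z) / (1 - z)"
proof -
  have "z \<noteq> 1" using assms by auto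
  with assms show ?thesis by (simp add: pos_le_divide_eq algebra_simps)
qed

lemma generator_value_bounds:
  fixes a b z zr w :: real
  assumes "0 \<le> a" "a \<le> b" "b \<le> 1" "z \<le> zr" "zr \<le> 1" "w < 1" "w \<le> b + zr - b * zr"
  defines "c \<equiv> generator_value a b z w"
  shows "a \<le> c" "w \<le> c + zr - c * zr" "min b ((w - z) / (1 - z)) \<le> c"
    and "c = a \<or> c = min b ((w - z) / (1 - z))"
proof -
  consider "w \<le> a + z - a * z" "c = a"
    | "a + z - a * z < w" "w \<le> b + z - b * z" "z < 1" "c = (w - z) / (1 - z)"
    | "b + z - b * z < w" "z < 1" "c = b"
    using assms unfolding c_def generator_value_def
    by (smt (verit) mult_cancel_left2 mult_cancel_right2 mult_le_one)
  then have "a \<le> c \<and> w \<le> c + zr - c * zr \<and> min b ((w - z) / (1 - z)) \<le> c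
    \<and> (c = a \<or> c = min b ((w - z) / (1 - z)))"
  proof cases
    case 1
    have "z * (1 - a) \<le> zr * (1 - a)" using assms by (intro mult_right_mono) auto
    with 1 assms show ?thesis
      using divide_le_if_le_maxmin[of a z w] by (auto simp: algebra_simps)
  next
    case 2
    then have "a \<le> c" "c \<le> b"
      by (simp_all add: pos_le_divide_eq pos_divide_le_eq algebra_simps)
    have "w = c + z - c * z" using 2 by (simp add: field_simps)
    moreover have "z - c * z \<le> zr - c * zr"
      using mult_right_mono[of z zr "1 - c"] assms \<open>c \<le> b\<close> by (simp add: algebra_simps)
    ultimately have "w \<le> c + zr - c * zr" by linarith
    with \<open>a \<le> c\<close> \<open>c \<le> b\<close> \<open>c = (w - z) / (1 - z)\<close> show ?thesis by (simp add: min_def)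
  next
    case 3
    then have "b < (w - z) / (1 - z)" by (simp add: pos_less_divide_eq algebra_simps)
    with 3 assms show ?thesis
      by auto
  qed
  then show "a \<le> c" "w \<le> c + zr - c * zr" "min b ((w - z) / (1 - z)) \<le> c"
    and "c = a \<or> c = min b ((w - z) / (1 - z))"
    by auto
qed

lemma generator_value_at_jump:
  assumes F: "mono_unit_fun F" and G: "mono_unit_fun G" and "w < 1"
    and "w \<le> right_lim (maxmin_K F G) y0"
  defines "c \<equiv> generator_value (left_lim F y0) (right_lim F y0) (G y0) w"
  shows "left_lim F y0 \<le> c" "c \<le> 1" "w \<le> c + right_lim G y0 - c * right_lim G y0"
    and "min (right_lim F y0) ((w - G y0) / (1 - G y0)) \<le> c"
    and "c = left_lim F y0 \<or> c = min (right_lim F y0) ((w - G y0) / (1 - G y0))"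
proof -
  interpret F: mono_unit_fun F by fact
  interpret G: mono_unit_fun G by fact
  have "0 \<le> left_lim F y0" "left_lim F y0 \<le> right_lim F y0" "right_lim F y0 \<le> 1"
    "G y0 \<le> right_lim G y0" "right_lim G y0 \<le> 1"
    "w \<le> right_lim F y0 + right_lim G y0 - right_lim F y0 * right_lim G y0"
    using F.left_lim_nonneg F.left_lim_le F.le_right_lim F.right_lim_le_one G.le_right_lim
      G.right_lim_le_one assms(4) right_lim_maxmin_K[OF F G] order_trans by metis+
  note bounds = generator_value_bounds[OF this(1-5) \<open>w < 1\<close> this(6), folded c_def]
  then show "left_lim F y0 \<le> c" "w \<le> c + right_lim G y0 - c * right_lim G y0"
    and "min (right_lim F y0) ((w - G y0) / (1 - G y0)) \<le> c"
    and "c = left_lim F y0 \<or> c = min (right_lim F y0) ((w - G y0) / (1 - G y0))"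
    by blast+
  show "c \<le> 1" using bounds(4) \<open>left_lim F y0 \<le> right_lim F y0\<close> \<open>right_lim F y0 \<le> 1\<close> by linarith
qed

(* (w - G y) / (1 - G y) solves u + G y - u * G y = w; it is 0 when G y = 1 (division by zero). *)
definition generator_bound :: "(real \<Rightarrow> real) \<Rightarrow> (real \<Rightarrow> real) \<Rightarrow> real \<Rightarrow> real \<Rightarrow> real" where
  "generator_bound F G w y = min (right_lim F y) ((w - G y) / (1 - G y))"

lemma generator_bound_mono:
  assumes "mono_unit_fun F'" "mono_unit_fun F" "\<And>y. F' y \<le> F y"
  shows "generator_bound F' G w y \<le> generator_bound F G w y"
  unfolding generator_bound_def using right_lim_mono[OF assms] by (rule min.mono) simp

lemma generator_bound_le_generator_value:
  assumes F: "mono_unit_fun F" and G: "mono_unit_fun G" and "w < 1"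
    and "w \<le> right_lim (maxmin_K F G) y0"
  shows "generator_bound F G w y \<le> generator_value (left_lim F y0) (right_lim F y0) (G y0) w"
    (is "_ \<le> ?c")
proof -
  interpret F: mono_unit_fun F by fact
  interpret G: mono_unit_fun G by fact
  note c = generator_value_at_jump[OF assms]
  have "0 \<le> ?c" using c(1) F.left_lim_nonneg order_trans by blast
  show ?thesis
    unfolding generator_bound_def
  proof (cases y y0 rule: linorder_cases)
    case less
    then show "min (right_lim F y) ((w - G y) / (1 - G y)) \<le> ?c"
      using F.right_lim_le_left_lim c(1) by (meson min.coboundedI1 order_trans)
  next
    case equal
    then show "min (right_lim F y) ((w - G y) / (1 - G y)) \<le> ?c" using c(4) by simp
  next
    case greater
    then have "right_lim G y0 \<le> G y" using G.right_lim_le by simp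
    then have "right_lim G y0 - ?c * right_lim G y0 \<le> G y - ?c * G y"
      using mult_right_mono[of "right_lim G y0" "G y" "1 - ?c"] c(2) by (simp add: algebra_simps)
    then have "(w - G y) / (1 - G y) \<le> ?c"
      using divide_le_if_le_maxmin[of ?c "G y" w] c(3) \<open>0 \<le> ?c\<close> G.le_one by simp
    then show "min (right_lim F y) ((w - G y) / (1 - G y)) \<le> ?c" by linarith
  qed
qed

lemma generator_value_approx:
  assumes F: "mono_unit_fun F" and G: "mono_unit_fun G" and "w < 1" and "e > 0"
    and jump: "left_lim (maxmin_K F G) y0 \<le> w" "w \<le> right_lim (maxmin_K F G) y0"
  obtains y where "generator_value (left_lim F y0) (right_lim F y0) (G y0) w - e < generator_bound F G w y"
proof -
  interpret F: mono_unit_fun F by fact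
  interpret G: mono_unit_fun G by fact
  define a c where "a = left_lim F y0" and "c = generator_value a (right_lim F y0) (G y0) w"
  note bounds = generator_value_at_jump[OF F G \<open>w < 1\<close> jump(2), folded a_def, folded c_def]
  from bounds(5) show ?thesis
  proof
    assume "c = a"
    obtain x where "x < y0" "a - e < F x"
      using F.left_lim_approx[OF \<open>e > 0\<close>] a_def by blast
    have "a + G x - a * G x \<le> a + left_lim G y0 - a * left_lim G y0"
      using mult_left_mono[of "G x" "left_lim G y0" "1 - a"] G.le_left_lim[OF \<open>x < y0\<close>]
        bounds(2) \<open>c = a\<close> by (simp add: algebra_simps)
    also have "\<dots> \<le> w" using jump(1) left_lim_maxmin_K[OF F G] a_def by simp
    finally have "a \<le> (w - G x) / (1 - G x)"
      using le_divide_if_maxmin_le G.le_one \<open>w < 1\<close> by blast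
    moreover have "a - e < right_lim F x" using \<open>a - e < F x\<close> F.le_right_lim[of x] by simp
    ultimately have "c - e < generator_bound F G w x"
      using \<open>c = a\<close> \<open>e > 0\<close> unfolding generator_bound_def by simp
    then show ?thesis using that unfolding c_def a_def by blast
  next
    assume "c = min (right_lim F y0) ((w - G y0) / (1 - G y0))"
    then have "c - e < generator_bound F G w y0"
      using \<open>e > 0\<close> unfolding generator_bound_def by linarith
    then show ?thesis using that unfolding c_def a_def by blast
  qed
qed

lemma generator_bound_le_canonical_generator:
  assumes "distribution_function F" "distribution_function G" "0 < w" "w < 1"
  shows "generator_bound F G w y \<le> canonical_generator F G w"
proof -
  obtain y0 where "w \<le> right_lim (maxmin_K F G) y0"
    and chi: "canonical_generator F G w = generator_value (left_lim F y0) (right_lim F y0) (G y0) w"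
    using canonical_generator_at_jump_point[OF assms] .
  then show ?thesis
    using generator_bound_le_generator_value \<open>w < 1\<close>
      assms(1,2)[THEN distribution_function_imp_mono_unit_fun] by simp
qed

lemma canonical_generator_eq_SUP:
  assumes "distribution_function F" "distribution_function G" "0 < w" "w < 1"
  shows "canonical_generator F G w = (SUP y. generator_bound F G w y)"
proof (rule cSup_eq_non_empty[symmetric])
  obtain y0 where jump: "left_lim (maxmin_K F G) y0 \<le> w" "w \<le> right_lim (maxmin_K F G) y0"
    and chi: "canonical_generator F G w = generator_value (left_lim F y0) (right_lim F y0) (G y0) w"
    using canonical_generator_at_jump_point[OF assms] .
  fix u assume ub: "\<And>v. v \<in> range (generator_bound F G w) \<Longrightarrow> v \<le> u"
  show "canonical_generator F G w \<le> u"
  proof (rule ccontr)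
    assume "\<not> canonical_generator F G w \<le> u"
    then obtain y where "u < generator_bound F G w y"
      using generator_value_approx[OF assms(1,2)[THEN distribution_function_imp_mono_unit_fun]
          \<open>w < 1\<close> _ jump, of "canonical_generator F G w - u"]
      unfolding chi by auto
    then show False using ub[OF rangeI] leD by blast
  qed
qed (use generator_bound_le_canonical_generator[OF assms] in auto)

theorem lemma2:
  fixes FY' FY FZ :: "real \<Rightarrow> real"
  assumes "distribution_function FY'"
    and "distribution_function FY"
    and "distribution_function FZ"
    and "\<And>y. FY' y \<le> FY y"
  shows "\<forall>w\<in>{0..1}. canonical_generator FY' FZ w \<le> canonical_generator FY FZ w"
proof
  fix w :: real assume "w \<in> {0..1}"
  then consider "w = 0 \<or> w = 1" | "0 < w" "w < 1" by fastforce
  then show "canonical_generator FY' FZ w \<le> canonical_generator FY FZ w"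
  proof cases
    case 1
    then show ?thesis unfolding canonical_generator_def by auto
  next
    case 2
    have "bdd_above (range (generator_bound FY FZ w))"
      using generator_bound_le_canonical_generator[OF assms(2,3) 2] by (intro bdd_aboveI2)
    then show ?thesis
      unfolding canonical_generator_eq_SUP[OF assms(1,3) 2] canonical_generator_eq_SUP[OF assms(2,3) 2]
      using generator_bound_mono[OF assms(1,2)[THEN distribution_function_imp_mono_unit_fun] assms(4)]
      by (intro cSUP_mono) auto
  qed
qed

end
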